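(* Assume the setting in the context, that the reward $r$ is $L_r$-Lipschitz on $\mathcal S\times\mathcal A$, and that the policy satisfies $W_2(\pi(\cdot\mid s),\pi(\cdot\mid s'))\le L_\pi\|s-s'\|$ for all $s,s'\in\mathcal S$. Then $$|\eta-\tilde\eta^{\mathrm{opc}}|\le L_r\sqrt{1+L_\pi^2}\sum_{t=0}^{T}\gamma^t\,W_2\big(\mathcal L(\hat s_t),\mathcal L(s_t)\big),$$ where $\mathcal L(\cdot)$ denotes the law (marginal distribution) of a random variable.
   Context: Setting: state space $\mathcal S\subseteq\mathbb R^{n_s}$, action space $\mathcal A\subseteq\mathbb R^{n_a}$, both with the Euclidean norm, and $\mathcal S\times\mathcal A$ normed by $\|(s,a)\|^2=\|s\|^2+\|a\|^2$. The true environment is given by a Markov transition kernel $p(\cdot\mid s,a)$ on $\mathcal S$, an initial distribution $\rho$ on $\mathcal S$, a reward $r:\mathcal S\times\mathcal A\to\mathbb R$, a discount $\gamma\in[0,1)$ and a horizon $T\in\mathbb N$. A (stochastic) policy is a Markov kernel $\pi(\cdot\mid s)$ from $\mathcal S$ to $\mathcal A$. A reference trajectory $(\hat s_t,\hat a_t)_{t=0}^T$ is generated by $\hat s_0\sim\rho$, $\hat a_t\sim\pi(\cdot\mid\hat s_t)$, $\hat s_{t+1}\sim p(\cdot\mid\hat s_t,\hat a_t)$, and the true expected return is $\eta=\mathbb E[\sum_{t=0}^T\gamma^t r(\hat s_t,\hat a_t)]$. Let $\tilde f:\mathcal S\times\mathcal A\to\mathbb R^{n_s}$ be a given function (the mean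 transition of a learned model). The generalized on-policy-corrections (OPC) rollout is defined jointly with the reference trajectory by $s_0=\hat s_0$ and, for each $t$, $a_t\sim\pi(\cdot\mid s_t)$ drawn independently of all other randomness given $s_t$, and $s_{t+1}=\hat s_{t+1}+\tilde f(s_t,a_t)-\tilde f(\hat s_t,\hat a_t)$ (assumed to lie in $\mathcal S$). Its expected return is $\tilde\eta^{\mathrm{opc}}=\mathbb E[\sum_{t=0}^T\gamma^t r(s_t,a_t)]$. All distributions involved are assumed to have finite second moments. $W_2$ denotes the 2-Wasserstein distance with respect to the Euclidean norm. *)

theory Defs
  imports "HOL-Probability.Probability"
begin

definition couplings :: "'x::euclidean_space measure \<Rightarrow> 'x measure \<Rightarrow> ('x \<times> 'x) measure set" where
  "couplings \<mu> \<nu> = {c. prob_space c \<and> sets c = sets (borel \<Otimes>\<^sub>M borel)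
      \<and> distr c borel fst = \<mu> \<and> distr c borel snd = \<nu>}"

text \<open>W2(mu,nu) = sqrt( inf over couplings of E ||X - Y||^2 ).  For measures with
  finite second moments the infimum is finite.\<close>
definition W2 :: "'x::euclidean_space measure \<Rightarrow> 'x measure \<Rightarrow> real" where
  "W2 \<mu> \<nu> = sqrt (enn2real (INF c\<in>couplings \<mu> \<nu>.
      \<integral>\<^sup>+ z. ennreal ((dist (fst z) (snd z))\<^sup>2) \<partial>c))"

text \<open>A point ((sh, ah), (s, a)) is the time-t tuple (reference state, reference action,
  OPC state, OPC action).  The tuple process is a Markov chain; opc_joint t is its law.\<close>

definition opc_init :: "'s::euclidean_space measure \<Rightarrow> ('s \<Rightarrow> 'a::euclidean_space measure)
    \<Rightarrow> (('s \<times> 'a) \<times> ('s \<times> 'a)) measure" where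
  "opc_init \<rho> \<pi> = \<rho> \<bind> (\<lambda>s0. distr (\<pi> s0 \<Otimes>\<^sub>M \<pi> s0) borel (\<lambda>(ah, a). ((s0, ah), (s0, a))))"

definition opc_step :: "('s::euclidean_space \<Rightarrow> 'a::euclidean_space measure)
    \<Rightarrow> ('s \<times> 'a \<Rightarrow> 's measure) \<Rightarrow> ('s \<times> 'a \<Rightarrow> 's)
    \<Rightarrow> (('s \<times> 'a) \<times> ('s \<times> 'a)) measure \<Rightarrow> (('s \<times> 'a) \<times> ('s \<times> 'a)) measure" where
  "opc_step \<pi> p f J = J \<bind> (\<lambda>((sh, ah), (s, a)).
      p (sh, ah) \<bind> (\<lambda>sh'. let s' = sh' + f (s, a) - f (sh, ah) in
        distr (\<pi> sh' \<Otimes>\<^sub>M \<pi> s') borel (\<lambda>(ah', a'). ((sh', ah'), (s', a')))))"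

primrec opc_joint :: "'s::euclidean_space measure \<Rightarrow> ('s \<Rightarrow> 'a::euclidean_space measure)
    \<Rightarrow> ('s \<times> 'a \<Rightarrow> 's measure) \<Rightarrow> ('s \<times> 'a \<Rightarrow> 's) \<Rightarrow> nat
    \<Rightarrow> (('s \<times> 'a) \<times> ('s \<times> 'a)) measure" where
  "opc_joint \<rho> \<pi> p f 0 = opc_init \<rho> \<pi>"
| "opc_joint \<rho> \<pi> p f (Suc t) = opc_step \<pi> p f (opc_joint \<rho> \<pi> p f t)"

definition true_return where
  "true_return \<rho> \<pi> p f r \<gamma> T =
     (\<Sum>t\<le>T. \<gamma> ^ t * (\<integral>z. r (fst z) \<partial>opc_joint \<rho> \<pi> p f t))"

definition opc_return where
  "opc_return \<rho> \<pi> p f r \<gamma> T =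
     (\<Sum>t\<le>T. \<gamma> ^ t * (\<integral>z. r (snd z) \<partial>opc_joint \<rho> \<pi> p f t))"

definition law_ref_state where
  "law_ref_state \<rho> \<pi> p f t = distr (opc_joint \<rho> \<pi> p f t) borel (\<lambda>z. fst (fst z))"

definition law_opc_state where
  "law_opc_state \<rho> \<pi> p f t = distr (opc_joint \<rho> \<pi> p f t) borel (\<lambda>z. fst (snd z))"

end

theory Submission
  imports Defs
begin

text \<open>Both the reference trajectory and the OPC rollout draw their actions afresh from \<open>\<pi>\<close> at
  their current states, so at every time \<open>t\<close> both state-action laws arise from the respective
  state laws through one and the same kernel, \<open>x \<mapsto>\<close> law of \<open>(x, a)\<close> with \<open>a \<sim> \<pi> x\<close>.
  The reward gap at time \<open>t\<close> is therefore the gap between the expectations of the averaged reward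
  \<open>r\<^sup>\<pi> x = \<integral> r (x, a) d(\<pi> x)\<close> under the two state laws. Lifting a coupling of \<open>\<pi> x\<close> and
  \<open>\<pi> y\<close> to the graphs shows that \<open>r\<^sup>\<pi>\<close> is \<open>L\<^sub>r \<surd>(1 + L\<^sub>\<pi>\<^sup>2)\<close>-Lipschitz, and the
  expectations of a \<open>K\<close>-Lipschitz function under two laws differ by at most \<open>K W\<^sub>2\<close>
  (Cauchy-Schwarz under a near-optimal coupling).\<close>

lemma le_one_plus_square: "t \<le> 1 + (t::real)\<^sup>2"
  by (smt (verit) power2_eq_square mult_le_cancel_left1 zero_le_square)

lemma lipschitz_on_integrable:
  fixes G :: "'x::euclidean_space \<Rightarrow> real"
  assumes M: "prob_space M" "sets M = sets borel" and moment: "integrable M (\<lambda>x. (norm x)\<^sup>2)"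
    and ae: "AE x in M. x \<in> U" and lip: "K-lipschitz_on U G" and G: "G \<in> borel_measurable borel"
  shows "integrable M G"
proof -
  interpret prob_space M by fact
  have "U \<noteq> {}"
  proof
    assume "U = {}"
    then have "AE x in M. False" using ae by simp
    then show False by (simp add: AE_False)
  qed
  then obtain u where u: "u \<in> U" by blast
  have K: "0 \<le> K" using lip lipschitz_on_nonneg by blast
  show ?thesis
  proof (rule Bochner_Integration.integrable_bound)
    show "integrable M (\<lambda>x. \<bar>G u\<bar> + K * norm u + K + K * (norm x)\<^sup>2)"
      using moment by auto
    show "G \<in> borel_measurable M"
      using G measurable_cong_sets[OF M(2) refl] by blast
    show "AE x in M. norm (G x) \<le> norm (\<bar>G u\<bar> + K * norm u + K + K * (norm x)\<^sup>2)"
      using ae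
    proof eventually_elim
      case (elim x)
      have "\<bar>G x - G u\<bar> \<le> K * dist x u"
        using lipschitz_onD[OF lip elim u] by (simp add: dist_real_def)
      also have "\<dots> \<le> K * norm x + K * norm u"
        using K mult_left_mono[OF norm_triangle_ineq4[of x u]] by (simp add: dist_norm distrib_left)
      also have "K * norm x \<le> K + K * (norm x)\<^sup>2"
        using mult_left_mono[OF le_one_plus_square K] by (simp add: distrib_left)
      finally have "\<bar>G x\<bar> \<le> \<bar>G u\<bar> + K * norm u + K + K * (norm x)\<^sup>2"
        using abs_triangle_ineq[of "G x - G u" "G u"] by simp
      then show ?case
        using order_trans[OF _ abs_ge_self] by simp
    qed
  qed
qed

lemma (in prob_space) square_integral_le_integral_square:
  fixes X :: "'a \<Rightarrow> real"
  assumes "integrable M X" "integrable M (\<lambda>x. (X x)\<^sup>2)"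
  shows "(expectation X)\<^sup>2 \<le> expectation (\<lambda>x. (X x)\<^sup>2)"
proof -
  have "0 \<le> expectation (\<lambda>x. (X x - expectation X)\<^sup>2)"
    by (rule integral_nonneg_AE) auto
  then show ?thesis using variance_eq[OF assms] by simp
qed

lemma (in prob_space) distr_pair_snd: "distr (N \<Otimes>\<^sub>M M) M snd = M" if "prob_space N"
proof -
  interpret N: prob_space N by fact
  interpret pair_sigma_finite M N ..
  interpret NM: pair_sigma_finite N M ..
  have "distr (N \<Otimes>\<^sub>M M) M snd = distr (distr (M \<Otimes>\<^sub>M N) (N \<Otimes>\<^sub>M M) (\<lambda>(x, y). (y, x))) M snd"
    by (rule arg_cong[where f="\<lambda>K. distr K M snd", OF NM.distr_pair_swap])
  also have "\<dots> = distr (M \<Otimes>\<^sub>M N) M fst"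
    by (subst distr_distr) (auto intro!: distr_cong)
  also have "\<dots> = M" using N.distr_pair_fst .
  finally show ?thesis .
qed

lemma integrable_distr_norm_sq:
  fixes h :: "'x::real_normed_vector \<Rightarrow> 'y::{real_normed_vector, second_countable_topology}"
  assumes M: "integrable M (\<lambda>z. (norm z)\<^sup>2)" and h: "h \<in> M \<rightarrow>\<^sub>M borel"
    and le: "\<And>z. norm (h z) \<le> norm z"
  shows "integrable (distr M borel h) (\<lambda>x. (norm x)\<^sup>2)"
proof -
  have "integrable M (\<lambda>z. (norm (h z))\<^sup>2)"
    by (rule Bochner_Integration.integrable_bound[OF M]) (use h le in \<open>auto intro!: power_mono\<close>)
  then show ?thesis using h by (simp add: integrable_distr_eq)
qed

lemma norm_fst_le_norm: "norm (fst z) \<le> norm z"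
  by (cases z) (simp add: norm_fst_le)

lemma norm_snd_le_norm: "norm (snd z) \<le> norm z"
  by (cases z) (simp add: norm_snd_le)

lemma abs_discounted_sum_diff_le:
  fixes a b c :: "nat \<Rightarrow> real"
  assumes \<gamma>: "0 \<le> \<gamma>" and le: "\<And>t. t \<le> T \<Longrightarrow> \<bar>a t - b t\<bar> \<le> c t"
  shows "\<bar>(\<Sum>t\<le>T. \<gamma> ^ t * a t) - (\<Sum>t\<le>T. \<gamma> ^ t * b t)\<bar> \<le> (\<Sum>t\<le>T. \<gamma> ^ t * c t)"
proof -
  have "\<bar>(\<Sum>t\<le>T. \<gamma> ^ t * a t) - (\<Sum>t\<le>T. \<gamma> ^ t * b t)\<bar> = \<bar>\<Sum>t\<le>T. \<gamma> ^ t * (a t - b t)\<bar>"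
    by (simp add: sum_subtractf right_diff_distrib)
  also have "\<dots> \<le> (\<Sum>t\<le>T. \<bar>\<gamma> ^ t * (a t - b t)\<bar>)"
    by (rule sum_abs)
  also have "\<dots> \<le> (\<Sum>t\<le>T. \<gamma> ^ t * c t)"
    using \<gamma> le by (intro sum_mono) (simp add: abs_mult mult_left_mono)
  finally show ?thesis .
qed

section \<open>Integration against probability kernels\<close>

lemma prob_kernelD:
  assumes "K \<in> borel \<rightarrow>\<^sub>M prob_algebra N"
  shows "K x \<in> space (prob_algebra N)" "prob_space (K x)" "sets (K x) = sets N"
  using measurable_space[OF assms, of x] by (auto simp: space_prob_algebra)

lemma distr_in_prob_algebra:
  assumes "M \<in> space (prob_algebra K)" "g \<in> K \<rightarrow>\<^sub>M N"
  shows "distr M N g \<in> space (prob_algebra N)"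
proof -
  have "g \<in> M \<rightarrow>\<^sub>M N"
    using assms by (simp add: space_prob_algebra cong: measurable_cong_sets)
  then show ?thesis
    using assms(1) by (auto simp: space_prob_algebra intro: prob_space.prob_space_distr)
qed

lemma bind_in_prob_algebra:
  assumes "K \<in> space (prob_algebra M)" "N \<in> M \<rightarrow>\<^sub>M prob_algebra L"
  shows "K \<bind> N \<in> space (prob_algebra L)"
  using prob_space_bind'[OF assms] sets_bind'[OF assms] by (simp add: space_prob_algebra)

lemma integral_bind_nonneg:
  fixes f :: "'b \<Rightarrow> real"
  assumes N: "N \<in> M \<rightarrow>\<^sub>M prob_algebra B" and f[measurable]: "f \<in> borel_measurable B"
    and nonneg: "\<And>y. 0 \<le> f y" and M: "space M \<noteq> {}" and int: "integrable (M \<bind> N) f"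
  shows "AE x in M. integrable (N x) f" "integrable M (\<lambda>x. integral\<^sup>L (N x) f)"
    and "integral\<^sup>L (M \<bind> N) f = (\<integral>x. integral\<^sup>L (N x) f \<partial>M)"
proof -
  have N'[measurable]: "N \<in> M \<rightarrow>\<^sub>M subprob_algebra B"
    using N by (rule measurable_prob_algebraD)
  have f_N: "f \<in> borel_measurable (N x)" if "x \<in> space M" for x
    using measurable_cong_sets[OF sets_kernel[OF N' that] refl] f by blast
  have f_bind[measurable]: "f \<in> borel_measurable (M \<bind> N)"
  proof -
    have "sets (M \<bind> N) = sets B"
      using sets_kernel[OF N'] M by (rule sets_bind)
    then show ?thesis using measurable_cong_sets f by blast
  qed
  define P where "P x = (\<integral>\<^sup>+y. ennreal (f y) \<partial>N x)" for x
  have P[measurable]: "P \<in> borel_measurable M"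
    unfolding P_def by (rule measurable_compose[OF N' nn_integral_measurable_subprob_algebra]) simp
  have inner: "integral\<^sup>L (N x) f = enn2real (P x)" if "x \<in> space M" for x
    unfolding P_def using f_N[OF that] nonneg by (intro integral_eq_nn_integral) auto
  have bind: "(\<integral>\<^sup>+y. ennreal (f y) \<partial>(M \<bind> N)) = integral\<^sup>N M P"
    unfolding P_def by (rule nn_integral_bind[OF _ N']) simp
  then have fin: "integral\<^sup>N M P < \<infinity>"
    using int nonneg by (simp add: integrable_iff_bounded)
  then have P_fin: "AE x in M. P x \<noteq> \<infinity>"
    by (intro nn_integral_PInf_AE) auto
  then show "AE x in M. integrable (N x) f"
    using AE_space
  proof eventually_elim
    case (elim x)
    then show ?case
      using f_N[of x] nonneg by (simp add: P_def integrable_iff_bounded less_top)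
  qed
  have P_enn2real: "(\<integral>\<^sup>+x. ennreal (enn2real (P x)) \<partial>M) = integral\<^sup>N M P"
    by (rule nn_integral_cong_AE) (use P_fin in \<open>auto simp: less_top\<close>)
  have "integrable M (\<lambda>x. enn2real (P x))"
    by (rule integrableI_nonneg) (use fin P_enn2real in auto)
  then show "integrable M (\<lambda>x. integral\<^sup>L (N x) f)"
    using inner by (subst Bochner_Integration.integrable_cong[where g="\<lambda>x. enn2real (P x)"]) auto
  have "integral\<^sup>L (M \<bind> N) f = enn2real (integral\<^sup>N M P)"
    using nonneg by (simp add: integral_eq_nn_integral bind)
  also have "\<dots> = (\<integral>x. enn2real (P x) \<partial>M)"
    by (simp add: integral_eq_nn_integral P_enn2real)
  also have "\<dots> = (\<integral>x. integral\<^sup>L (N x) f \<partial>M)"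
    by (rule Bochner_Integration.integral_cong[OF refl inner[symmetric]])
  finally show "integral\<^sup>L (M \<bind> N) f = (\<integral>x. integral\<^sup>L (N x) f \<partial>M)" .
qed

text \<open>Unlike the library's \<open>integral_bind\<close>, this needs no bound on the integrand.\<close>
lemma integral_bind_integrable:
  fixes f :: "'b \<Rightarrow> real"
  assumes N: "N \<in> M \<rightarrow>\<^sub>M prob_algebra B" and f[measurable]: "f \<in> borel_measurable B"
    and M: "space M \<noteq> {}" and int: "integrable (M \<bind> N) f"
  shows "integral\<^sup>L (M \<bind> N) f = (\<integral>x. integral\<^sup>L (N x) f \<partial>M)"
proof -
  define f\<^sub>p f\<^sub>n where "f\<^sub>p y = max (f y) 0" and "f\<^sub>n y = max (- f y) 0" for y
  have f_parts: "f = (\<lambda>y. f\<^sub>p y - f\<^sub>n y)"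
    by (auto simp: fun_eq_iff f\<^sub>p_def f\<^sub>n_def max_def)
  have meas: "f\<^sub>p \<in> borel_measurable B" "f\<^sub>n \<in> borel_measurable B"
    and nonneg: "\<And>y. 0 \<le> f\<^sub>p y" "\<And>y. 0 \<le> f\<^sub>n y"
    and int_parts: "integrable (M \<bind> N) f\<^sub>p" "integrable (M \<bind> N) f\<^sub>n"
    unfolding f\<^sub>p_def[abs_def] f\<^sub>n_def[abs_def] using int by auto
  note p = integral_bind_nonneg[OF N meas(1) nonneg(1) M int_parts(1)]
    and n = integral_bind_nonneg[OF N meas(2) nonneg(2) M int_parts(2)]
  have "integral\<^sup>L (M \<bind> N) f = integral\<^sup>L (M \<bind> N) f\<^sub>p - integral\<^sup>L (M \<bind> N) f\<^sub>n"
    unfolding f_parts by (rule Bochner_Integration.integral_diff[OF int_parts])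
  also have "\<dots> = (\<integral>x. integral\<^sup>L (N x) f\<^sub>p - integral\<^sup>L (N x) f\<^sub>n \<partial>M)"
    using p n by simp
  also have "\<dots> = (\<integral>x. integral\<^sup>L (N x) f \<partial>M)"
  proof (rule integral_cong_AE)
    show "(\<lambda>x. integral\<^sup>L (N x) f\<^sub>p - integral\<^sup>L (N x) f\<^sub>n) \<in> borel_measurable M"
      using Bochner_Integration.integrable_diff[OF p(2) n(2)] by (rule borel_measurable_integrable)
    show "(\<lambda>x. integral\<^sup>L (N x) f) \<in> borel_measurable M"
      using measurable_prob_algebraD[OF N] by (rule measurable_compose[OF _ integral_measurable_subprob_algebra[OF f]])
    show "AE x in M. integral\<^sup>L (N x) f\<^sub>p - integral\<^sup>L (N x) f\<^sub>n = integral\<^sup>L (N x) f"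
      using p(1) n(1) by eventually_elim (simp add: f_parts)
  qed
  finally show ?thesis .
qed

lemma measurable_Pair_borel:
  "Pair x \<in> (borel :: 'b::second_countable_topology measure) \<rightarrow>\<^sub>M (borel :: ('a::second_countable_topology \<times> 'b) measure)"
  unfolding borel_prod[symmetric] by measurable

lemma measurable_fst_borel:
  "fst \<in> (borel :: ('a::second_countable_topology \<times> 'b::second_countable_topology) measure) \<rightarrow>\<^sub>M borel"
  unfolding borel_prod[symmetric] by measurable

lemma measurable_snd_borel:
  "snd \<in> (borel :: ('a::second_countable_topology \<times> 'b::second_countable_topology) measure) \<rightarrow>\<^sub>M borel"
  unfolding borel_prod[symmetric] by measurable

lemma measurable_diag_borel:
  "(\<lambda>x. (x, x)) \<in> (borel :: 'a::second_countable_topology measure) \<rightarrow>\<^sub>M borel"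
  unfolding borel_prod[symmetric] by measurable

lemma measurable_map_prod_borel:
  fixes g :: "'u::second_countable_topology \<Rightarrow> 'x::second_countable_topology"
    and h :: "'v::second_countable_topology \<Rightarrow> 'y::second_countable_topology"
  assumes [measurable]: "g \<in> borel_measurable borel" "h \<in> borel_measurable borel"
  shows "map_prod g h \<in> borel_measurable borel"
  unfolding map_prod_def borel_prod[symmetric] by measurable

lemma distr_distr_map_prod:
  fixes g :: "'u::second_countable_topology \<Rightarrow> 'x::second_countable_topology"
    and h :: "'v::second_countable_topology \<Rightarrow> 'y::second_countable_topology"
  assumes c: "sets c = sets borel" and g: "g \<in> borel_measurable borel" and h: "h \<in> borel_measurable borel"
  shows "distr (distr c borel (map_prod g h)) borel fst = distr (distr c borel fst) borel g"
    and "distr (distr c borel (map_prod g h)) borel snd = distr (distr c borel snd) borel h"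
proof -
  have gh: "map_prod g h \<in> c \<rightarrow>\<^sub>M borel"
    using measurable_map_prod_borel[OF g h] measurable_cong_sets[OF c refl] by blast
  have proj: "fst \<in> c \<rightarrow>\<^sub>M borel" "snd \<in> c \<rightarrow>\<^sub>M borel"
    using measurable_fst_borel measurable_snd_borel c by (simp_all cong: measurable_cong_sets)
  show "distr (distr c borel (map_prod g h)) borel fst = distr (distr c borel fst) borel g"
    using distr_distr[OF measurable_fst_borel gh] distr_distr[OF g proj(1)] by (simp add: comp_def)
  show "distr (distr c borel (map_prod g h)) borel snd = distr (distr c borel snd) borel h"
    using distr_distr[OF measurable_snd_borel gh] distr_distr[OF h proj(2)] by (simp add: comp_def)
qed

section \<open>Couplings and the transport cost\<close>

definition transport_cost :: "('x::metric_space \<times> 'x) measure \<Rightarrow> real" where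
  "transport_cost c = (\<integral>z. (dist (fst z) (snd z))\<^sup>2 \<partial>c)"

lemma couplings_D:
  assumes "c \<in> couplings \<mu> \<nu>"
  shows "prob_space c" "sets c = sets borel" "distr c borel fst = \<mu>" "distr c borel snd = \<nu>"
    and "fst \<in> c \<rightarrow>\<^sub>M borel" "snd \<in> c \<rightarrow>\<^sub>M borel"
proof -
  have sets: "sets c = sets (borel \<Otimes>\<^sub>M borel)" using assms by (simp add: couplings_def)
  then show "sets c = sets borel" unfolding borel_prod .
  show "fst \<in> c \<rightarrow>\<^sub>M borel" "snd \<in> c \<rightarrow>\<^sub>M borel"
    using measurable_cong_sets[OF sets refl] by auto
  show "prob_space c" "distr c borel fst = \<mu>" "distr c borel snd = \<nu>"
    using assms by (simp_all add: couplings_def)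
qed

lemma couplings_integral:
  fixes G :: "'x::euclidean_space \<Rightarrow> real"
  assumes c: "c \<in> couplings \<mu> \<nu>" and G[measurable]: "G \<in> borel_measurable borel"
  shows "integrable \<mu> G \<longleftrightarrow> integrable c (\<lambda>z. G (fst z))" "integral\<^sup>L \<mu> G = (\<integral>z. G (fst z) \<partial>c)"
    and "integrable \<nu> G \<longleftrightarrow> integrable c (\<lambda>z. G (snd z))" "integral\<^sup>L \<nu> G = (\<integral>z. G (snd z) \<partial>c)"
proof -
  note couplings_D(5,6)[OF c, measurable]
  show "integrable \<mu> G \<longleftrightarrow> integrable c (\<lambda>z. G (fst z))" "integral\<^sup>L \<mu> G = (\<integral>z. G (fst z) \<partial>c)"
    "integrable \<nu> G \<longleftrightarrow> integrable c (\<lambda>z. G (snd z))" "integral\<^sup>L \<nu> G = (\<integral>z. G (snd z) \<partial>c)"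
    unfolding couplings_D(3,4)[OF c, symmetric] by (simp_all add: integrable_distr_eq integral_distr)
qed

lemma couplings_AE:
  assumes c: "c \<in> couplings \<mu> \<nu>" and U: "U \<in> sets borel"
  shows "(AE x in \<mu>. x \<in> U) \<longleftrightarrow> (AE z in c. fst z \<in> U)" "(AE x in \<nu>. x \<in> U) \<longleftrightarrow> (AE z in c. snd z \<in> U)"
proof -
  note couplings_D(5,6)[OF c, measurable]
  show "(AE x in \<mu>. x \<in> U) \<longleftrightarrow> (AE z in c. fst z \<in> U)" "(AE x in \<nu>. x \<in> U) \<longleftrightarrow> (AE z in c. snd z \<in> U)"
    unfolding couplings_D(3,4)[OF c, symmetric] using U by (simp_all add: AE_distr_iff)
qed

lemma transport_cost_integrable:
  fixes \<mu> \<nu> :: "'x::euclidean_space measure"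
  assumes c: "c \<in> couplings \<mu> \<nu>"
    and \<mu>: "integrable \<mu> (\<lambda>x. (norm x)\<^sup>2)" and \<nu>: "integrable \<nu> (\<lambda>x. (norm x)\<^sup>2)"
  shows "integrable c (\<lambda>z. (dist (fst z) (snd z))\<^sup>2)"
proof (rule Bochner_Integration.integrable_bound)
  show "integrable c (\<lambda>z. 2 * (norm (fst z))\<^sup>2 + 2 * (norm (snd z))\<^sup>2)"
    using \<mu> \<nu> by (simp add: couplings_integral[OF c])
  show "(\<lambda>z. (dist (fst z) (snd z))\<^sup>2) \<in> borel_measurable c"
    using couplings_D(5,6)[OF c] by measurable
  have "(dist x y)\<^sup>2 \<le> 2 * (norm x)\<^sup>2 + 2 * (norm y)\<^sup>2" for x y :: 'x
  proof -
    have "(dist x y)\<^sup>2 \<le> (norm x + norm y)\<^sup>2"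
      by (simp add: dist_norm norm_triangle_ineq4 power_mono)
    also have "\<dots> \<le> 2 * (norm x)\<^sup>2 + 2 * (norm y)\<^sup>2"
      by (smt (verit) sum_squares_bound zero_le_power2 power2_sum)
    finally show ?thesis .
  qed
  then show "AE z in c. norm ((dist (fst z) (snd z))\<^sup>2) \<le> norm (2 * (norm (fst z))\<^sup>2 + 2 * (norm (snd z))\<^sup>2)"
    by simp
qed

text \<open>Kantorovich duality in its easy direction, for Lipschitz test functions.\<close>
lemma lipschitz_integral_diff_le_transport_cost:
  fixes G :: "'x::euclidean_space \<Rightarrow> real"
  assumes c: "c \<in> couplings \<mu> \<nu>"
    and \<mu>: "integrable \<mu> (\<lambda>x. (norm x)\<^sup>2)" and \<nu>: "integrable \<nu> (\<lambda>x. (norm x)\<^sup>2)"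
    and U: "U \<in> sets borel" and \<mu>U: "AE x in \<mu>. x \<in> U" and \<nu>U: "AE x in \<nu>. x \<in> U"
    and lip: "K-lipschitz_on U G" and G: "G \<in> borel_measurable borel"
  shows "\<bar>integral\<^sup>L \<mu> G - integral\<^sup>L \<nu> G\<bar> \<le> K * sqrt (transport_cost c)"
proof -
  interpret prob_space c using couplings_D(1)[OF c] .
  have K: "0 \<le> K" using lip lipschitz_on_nonneg by blast
  note couplings_D(5,6)[OF c, measurable]
  have laws: "prob_space \<mu>" "sets \<mu> = sets borel" "prob_space \<nu>" "sets \<nu> = sets borel"
    unfolding couplings_D(3,4)[OF c, symmetric] by (auto intro!: prob_space_distr)
  have G1: "integrable c (\<lambda>z. G (fst z))" and G2: "integrable c (\<lambda>z. G (snd z))"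
    using lipschitz_on_integrable[OF laws(1,2) \<mu> \<mu>U lip G] lipschitz_on_integrable[OF laws(3,4) \<nu> \<nu>U lip G]
    by (simp_all add: couplings_integral[OF c G])
  have d2: "integrable c (\<lambda>z. (dist (fst z) (snd z))\<^sup>2)"
    by (rule transport_cost_integrable[OF c \<mu> \<nu>])
  have d: "integrable c (\<lambda>z. dist (fst z) (snd z))"
    by (rule Bochner_Integration.integrable_bound[where f="\<lambda>z. 1 + (dist (fst z) (snd z))\<^sup>2"])
       (use d2 in \<open>auto simp: le_one_plus_square\<close>)
  have "\<bar>integral\<^sup>L \<mu> G - integral\<^sup>L \<nu> G\<bar> = \<bar>\<integral>z. G (fst z) - G (snd z) \<partial>c\<bar>"
    using G1 G2 by (simp add: couplings_integral[OF c G])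
  also have "\<dots> \<le> (\<integral>z. K * dist (fst z) (snd z) \<partial>c)"
  proof (rule order_trans[OF integral_abs_bound integral_mono_AE])
    show "AE z in c. \<bar>G (fst z) - G (snd z)\<bar> \<le> K * dist (fst z) (snd z)"
      using \<mu>U \<nu>U unfolding couplings_AE[OF c U]
      by eventually_elim (simp add: lipschitz_onD[OF lip, unfolded dist_real_def])
  qed (use G1 G2 d in auto)
  also have "\<dots> \<le> K * sqrt (transport_cost c)"
  proof -
    have "(\<integral>z. dist (fst z) (snd z) \<partial>c)\<^sup>2 \<le> transport_cost c"
      unfolding transport_cost_def by (rule square_integral_le_integral_square[OF d d2])
    then show ?thesis using K by (simp add: real_le_rsqrt mult_left_mono)
  qed
  finally show ?thesis .
qed

lemma pair_measure_in_couplings: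
  assumes "\<mu> \<in> space (prob_algebra borel)" "\<nu> \<in> space (prob_algebra borel)"
  shows "\<mu> \<Otimes>\<^sub>M \<nu> \<in> couplings \<mu> \<nu>"
proof -
  interpret \<mu>: prob_space \<mu> using assms(1) by (simp add: space_prob_algebra)
  interpret \<nu>: prob_space \<nu> using assms(2) by (simp add: space_prob_algebra)
  have sets: "sets \<mu> = sets borel" "sets \<nu> = sets borel" using assms by (simp_all add: space_prob_algebra)
  have "distr (\<mu> \<Otimes>\<^sub>M \<nu>) borel fst = distr (\<mu> \<Otimes>\<^sub>M \<nu>) \<mu> fst"
    by (rule distr_cong) (simp_all add: sets)
  moreover have "distr (\<mu> \<Otimes>\<^sub>M \<nu>) borel snd = distr (\<mu> \<Otimes>\<^sub>M \<nu>) \<nu> snd"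
    by (rule distr_cong) (simp_all add: sets)
  ultimately have "distr (\<mu> \<Otimes>\<^sub>M \<nu>) borel fst = \<mu>" "distr (\<mu> \<Otimes>\<^sub>M \<nu>) borel snd = \<nu>"
    using \<nu>.distr_pair_fst \<nu>.distr_pair_snd[OF \<mu>.prob_space_axioms] by simp_all
  then show ?thesis
    unfolding couplings_def using sets_pair_measure_cong[OF sets] prob_space_pair[OF \<mu>.prob_space_axioms \<nu>.prob_space_axioms]
    by auto
qed

lemma exists_coupling_transport_cost_less:
  fixes \<mu> \<nu> :: "'x::euclidean_space measure"
  assumes \<mu>: "\<mu> \<in> space (prob_algebra borel)" "integrable \<mu> (\<lambda>x. (norm x)\<^sup>2)"
    and \<nu>: "\<nu> \<in> space (prob_algebra borel)" "integrable \<nu> (\<lambda>x. (norm x)\<^sup>2)"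
    and e: "0 < e"
  obtains c where "c \<in> couplings \<mu> \<nu>" "transport_cost c < (W2 \<mu> \<nu>)\<^sup>2 + e"
proof -
  define F where "F c = (\<integral>\<^sup>+ z. ennreal ((dist (fst z) (snd z))\<^sup>2) \<partial>c)" for c :: "('x \<times> 'x) measure"
  define I where "I = (INF c\<in>couplings \<mu> \<nu>. F c)"
  have cost_nonneg: "0 \<le> transport_cost c" for c :: "('x \<times> 'x) measure"
    unfolding transport_cost_def by (rule integral_nonneg_AE) auto
  have F: "F c = ennreal (transport_cost c)" if "c \<in> couplings \<mu> \<nu>" for c
    unfolding F_def transport_cost_def
    by (rule nn_integral_eq_integral[OF transport_cost_integrable[OF that \<mu>(2) \<nu>(2)]]) auto
  have "I \<le> F (\<mu> \<Otimes>\<^sub>M \<nu>)"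
    unfolding I_def by (rule INF_lower[OF pair_measure_in_couplings[OF \<mu>(1) \<nu>(1)]])
  then have "I < \<infinity>"
    using F[OF pair_measure_in_couplings[OF \<mu>(1) \<nu>(1)]] by (simp add: order_le_less_trans)
  moreover have "W2 \<mu> \<nu> = sqrt (enn2real I)"
    unfolding W2_def I_def F_def ..
  ultimately have "I = ennreal ((W2 \<mu> \<nu>)\<^sup>2)"
    by (simp add: less_top)
  also have "\<dots> < ennreal ((W2 \<mu> \<nu>)\<^sup>2 + e)"
    using e by (intro ennreal_lessI add_nonneg_pos) auto
  finally obtain c where c: "c \<in> couplings \<mu> \<nu>" and "F c < ennreal ((W2 \<mu> \<nu>)\<^sup>2 + e)"
    unfolding I_def INF_less_iff by blast
  then have "transport_cost c < (W2 \<mu> \<nu>)\<^sup>2 + e"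
    using cost_nonneg[of c] by (simp add: F ennreal_less_iff)
  with c show thesis by (rule that)
qed

lemma le_W2_if_le_transport_costs:
  fixes \<mu> \<nu> :: "'x::euclidean_space measure"
  assumes \<mu>: "\<mu> \<in> space (prob_algebra borel)" "integrable \<mu> (\<lambda>x. (norm x)\<^sup>2)"
    and \<nu>: "\<nu> \<in> space (prob_algebra borel)" "integrable \<nu> (\<lambda>x. (norm x)\<^sup>2)"
    and K: "0 \<le> K"
    and le: "\<And>c. c \<in> couplings \<mu> \<nu> \<Longrightarrow> X \<le> K * sqrt (a + transport_cost c)"
  shows "X \<le> K * sqrt (a + (W2 \<mu> \<nu>)\<^sup>2)"
proof -
  have "((\<lambda>e. K * sqrt (a + (W2 \<mu> \<nu>)\<^sup>2 + e)) \<longlongrightarrow> K * sqrt (a + (W2 \<mu> \<nu>)\<^sup>2 + 0)) (at_right 0)"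
    by (intro tendsto_intros)
  moreover have "\<forall>\<^sub>F e in at_right 0. X \<le> K * sqrt (a + (W2 \<mu> \<nu>)\<^sup>2 + e)"
  proof (rule eventually_mono[OF eventually_at_right_less])
    fix e :: real assume "0 < e"
    then obtain c where c: "c \<in> couplings \<mu> \<nu>" and "transport_cost c < (W2 \<mu> \<nu>)\<^sup>2 + e"
      using exists_coupling_transport_cost_less[OF \<mu> \<nu>] by blast
    then have "K * sqrt (a + transport_cost c) \<le> K * sqrt (a + (W2 \<mu> \<nu>)\<^sup>2 + e)"
      using K by (intro mult_left_mono) auto
    then show "X \<le> K * sqrt (a + (W2 \<mu> \<nu>)\<^sup>2 + e)"
      using le[OF c] by linarith
  qed
  ultimately show ?thesis
    by (intro tendsto_lowerbound) auto
qed

lemma lipschitz_integral_diff_le_W2: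
  fixes G :: "'x::euclidean_space \<Rightarrow> real"
  assumes \<mu>: "\<mu> \<in> space (prob_algebra borel)" "integrable \<mu> (\<lambda>x. (norm x)\<^sup>2)"
    and \<nu>: "\<nu> \<in> space (prob_algebra borel)" "integrable \<nu> (\<lambda>x. (norm x)\<^sup>2)"
    and U: "U \<in> sets borel" and \<mu>U: "AE x in \<mu>. x \<in> U" and \<nu>U: "AE x in \<nu>. x \<in> U"
    and lip: "K-lipschitz_on U G" and G: "G \<in> borel_measurable borel"
  shows "\<bar>integral\<^sup>L \<mu> G - integral\<^sup>L \<nu> G\<bar> \<le> K * W2 \<mu> \<nu>"
proof -
  have "\<bar>integral\<^sup>L \<mu> G - integral\<^sup>L \<nu> G\<bar> \<le> K * sqrt (0 + (W2 \<mu> \<nu>)\<^sup>2)"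
  proof (rule le_W2_if_le_transport_costs[OF \<mu> \<nu> lipschitz_on_nonneg[OF lip]])
    fix c assume "c \<in> couplings \<mu> \<nu>"
    then show "\<bar>integral\<^sup>L \<mu> G - integral\<^sup>L \<nu> G\<bar> \<le> K * sqrt (0 + transport_cost c)"
      using lipschitz_integral_diff_le_transport_cost[OF _ \<mu>(2) \<nu>(2) U \<mu>U \<nu>U lip G] by simp
  qed
  then show ?thesis by (simp add: W2_def)
qed

lemma couplings_distr_map_prod:
  fixes g :: "'u::euclidean_space \<Rightarrow> 'x::euclidean_space" and h :: "'u \<Rightarrow> 'x"
  assumes c: "c \<in> couplings \<mu> \<nu>" and g: "g \<in> borel_measurable borel" and h: "h \<in> borel_measurable borel"
  shows "distr c borel (map_prod g h) \<in> couplings (distr \<mu> borel g) (distr \<nu> borel h)"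
proof -
  note c' = couplings_D[OF c]
  have "map_prod g h \<in> c \<rightarrow>\<^sub>M borel"
    using measurable_map_prod_borel[OF g h] measurable_cong_sets[OF c'(2) refl] by blast
  moreover have "sets (distr c borel (map_prod g h)) = sets (borel \<Otimes>\<^sub>M borel)"
    by (simp only: sets_distr borel_prod)
  ultimately show ?thesis
    unfolding couplings_def using distr_distr_map_prod[OF c'(2) g h] c'(3,4) prob_space.prob_space_distr[OF c'(1)]
    by simp
qed

lemma transport_cost_distr_map_prod_Pair:
  fixes x y :: "'s::euclidean_space" and c :: "('a::euclidean_space \<times> 'a) measure"
  assumes c: "c \<in> couplings \<mu> \<nu>" and cost: "integrable c (\<lambda>z. (dist (fst z) (snd z))\<^sup>2)"
  shows "transport_cost (distr c borel (map_prod (Pair x) (Pair y))) = (dist x y)\<^sup>2 + transport_cost c"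
proof -
  interpret prob_space c using couplings_D(1)[OF c] .
  have "map_prod (Pair x) (Pair y) \<in> c \<rightarrow>\<^sub>M borel"
    using measurable_map_prod_borel[OF measurable_Pair_borel measurable_Pair_borel]
      measurable_cong_sets[OF couplings_D(2)[OF c] refl] by blast
  moreover have "(\<lambda>z. (dist (fst z) (snd z))\<^sup>2) \<in> borel_measurable (borel :: (('s \<times> 'a) \<times> ('s \<times> 'a)) measure)"
    by (intro borel_measurable_continuous_onI continuous_intros)
  ultimately have "transport_cost (distr c borel (map_prod (Pair x) (Pair y)))
      = (\<integral>z. (dist (fst (map_prod (Pair x) (Pair y) z)) (snd (map_prod (Pair x) (Pair y) z)))\<^sup>2 \<partial>c)"
    unfolding transport_cost_def by (rule integral_distr)
  also have "\<dots> = (\<integral>z. (dist x y)\<^sup>2 + (dist (fst z) (snd z))\<^sup>2 \<partial>c)"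
    by (intro Bochner_Integration.integral_cong) (auto simp: dist_Pair_Pair)
  also have "\<dots> = (dist x y)\<^sup>2 + transport_cost c"
    using cost by (simp add: transport_cost_def prob_space)
  finally show ?thesis .
qed

section \<open>The reference trajectory and the OPC rollout\<close>

definition policy_graph :: "('s::euclidean_space \<Rightarrow> 'a::euclidean_space measure) \<Rightarrow> 's \<Rightarrow> ('s \<times> 'a) measure" where
  "policy_graph \<pi> x = distr (\<pi> x) borel (Pair x)"

definition policy_pair :: "('s::euclidean_space \<Rightarrow> 'a::euclidean_space measure) \<Rightarrow> 's \<times> 's
    \<Rightarrow> (('s \<times> 'a) \<times> ('s \<times> 'a)) measure" where
  "policy_pair \<pi> k = distr (\<pi> (fst k) \<Otimes>\<^sub>M \<pi> (snd k)) borel (map_prod (Pair (fst k)) (Pair (snd k)))"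

definition opc_transition :: "('s::euclidean_space \<times> 'a::euclidean_space \<Rightarrow> 's measure) \<Rightarrow> ('s \<times> 'a \<Rightarrow> 's)
    \<Rightarrow> ('s \<times> 'a) \<times> ('s \<times> 'a) \<Rightarrow> ('s \<times> 's) measure" where
  "opc_transition p f w = distr (p (fst w)) borel (\<lambda>s'. (s', s' + f (snd w) - f (fst w)))"

definition opc_states_law :: "'s::euclidean_space measure \<Rightarrow> ('s \<Rightarrow> 'a::euclidean_space measure)
    \<Rightarrow> ('s \<times> 'a \<Rightarrow> 's measure) \<Rightarrow> ('s \<times> 'a \<Rightarrow> 's) \<Rightarrow> nat \<Rightarrow> ('s \<times> 's) measure" where
  "opc_states_law \<rho> \<pi> p f t = (case t of
      0 \<Rightarrow> distr \<rho> borel (\<lambda>s. (s, s))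
    | Suc t' \<Rightarrow> opc_joint \<rho> \<pi> p f t' \<bind> opc_transition p f)"

lemma policy_graph_measurable:
  assumes [measurable]: "\<pi> \<in> borel \<rightarrow>\<^sub>M prob_algebra borel"
  shows "policy_graph \<pi> \<in> borel \<rightarrow>\<^sub>M prob_algebra borel"
  unfolding policy_graph_def[abs_def] borel_prod[symmetric] by measurable

lemma policy_pair_measurable:
  assumes [measurable]: "\<pi> \<in> borel \<rightarrow>\<^sub>M prob_algebra borel"
  shows "policy_pair \<pi> \<in> borel \<rightarrow>\<^sub>M prob_algebra borel"
  unfolding policy_pair_def[abs_def] map_prod_def borel_prod[symmetric] by measurable

lemma opc_transition_measurable:
  assumes "p \<in> borel \<rightarrow>\<^sub>M prob_algebra borel" "f \<in> borel_measurable borel"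
  shows "opc_transition p f \<in> borel \<rightarrow>\<^sub>M prob_algebra borel"
proof -
  have [measurable]: "f \<in> borel_measurable (borel \<Otimes>\<^sub>M borel)" "p \<in> borel \<Otimes>\<^sub>M borel \<rightarrow>\<^sub>M prob_algebra borel"
    using assms by (simp_all add: borel_prod)
  show ?thesis unfolding opc_transition_def[abs_def] borel_prod[symmetric] by measurable
qed

lemma opc_init_eq_bind_policy_pair:
  assumes \<rho>: "\<rho> \<in> space (prob_algebra borel)" and \<pi>: "\<pi> \<in> borel \<rightarrow>\<^sub>M prob_algebra borel"
  shows "opc_init \<rho> \<pi> = distr \<rho> borel (\<lambda>s. (s, s)) \<bind> policy_pair \<pi>"
proof -
  have \<rho>': "prob_space \<rho>" "sets \<rho> = sets borel" using \<rho> by (auto simp: space_prob_algebra)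
  have "(\<lambda>s. (s, s)) \<in> \<rho> \<rightarrow>\<^sub>M borel"
    using measurable_diag_borel measurable_cong_sets[OF \<rho>'(2) refl] by blast
  then have "distr \<rho> borel (\<lambda>s. (s, s)) \<bind> policy_pair \<pi> = \<rho> \<bind> (\<lambda>s. policy_pair \<pi> (s, s))"
    using measurable_prob_algebraD[OF policy_pair_measurable[OF \<pi>]] prob_space.not_empty[OF \<rho>'(1)]
    by (rule bind_distr)
  then show ?thesis
    by (simp add: opc_init_def policy_pair_def map_prod_def)
qed

lemma opc_step_eq_bind_policy_pair:
  fixes \<pi> :: "'s::euclidean_space \<Rightarrow> 'a::euclidean_space measure"
  assumes J: "J \<in> space (prob_algebra borel)" and \<pi>: "\<pi> \<in> borel \<rightarrow>\<^sub>M prob_algebra borel"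
    and p: "p \<in> borel \<rightarrow>\<^sub>M prob_algebra borel" and f[measurable]: "f \<in> borel_measurable borel"
  shows "opc_step \<pi> p f J = (J \<bind> opc_transition p f) \<bind> policy_pair \<pi>"
proof -
  have pair: "policy_pair \<pi> \<in> borel \<rightarrow>\<^sub>M subprob_algebra borel"
    using measurable_prob_algebraD[OF policy_pair_measurable[OF \<pi>]] .
  have step: "p (sh, ah) \<bind> (\<lambda>sh'. let s' = sh' + f (s, a) - f (sh, ah) in
        distr (\<pi> sh' \<Otimes>\<^sub>M \<pi> s') borel (\<lambda>(ah', a'). ((sh', ah'), (s', a'))))
      = opc_transition p f ((sh, ah), (s, a)) \<bind> policy_pair \<pi>" for sh ah s a
  proof -
    note p' = prob_kernelD[OF p]
    have "(\<lambda>sh'. (sh', sh' + f (s, a) - f (sh, ah))) \<in> (borel :: 's measure) \<rightarrow>\<^sub>M borel"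
      unfolding borel_prod[symmetric] by measurable
    then have "(\<lambda>sh'. (sh', sh' + f (s, a) - f (sh, ah))) \<in> p (sh, ah) \<rightarrow>\<^sub>M borel"
      using measurable_cong_sets[OF p'(3) refl] by blast
    then show ?thesis unfolding opc_transition_def
      by (simp add: bind_distr[OF _ pair prob_space.not_empty[OF p'(2)]] policy_pair_def map_prod_def Let_def)
  qed
  have "opc_step \<pi> p f J = J \<bind> (\<lambda>w. opc_transition p f w \<bind> policy_pair \<pi>)"
    unfolding opc_step_def by (rule bind_cong_All) (force simp: step split: prod.splits)
  also have "\<dots> = (J \<bind> opc_transition p f) \<bind> policy_pair \<pi>"
  proof (rule bind_assoc[symmetric])
    show "opc_transition p f \<in> J \<rightarrow>\<^sub>M subprob_algebra borel"
      using measurable_prob_algebraD[OF opc_transition_measurable[OF p f]] J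
      by (simp add: space_prob_algebra cong: measurable_cong_sets)
  qed (rule pair)
  finally show ?thesis .
qed

lemma distr_policy_pair:
  assumes \<pi>: "\<pi> \<in> borel \<rightarrow>\<^sub>M prob_algebra borel"
  shows "distr (policy_pair \<pi> k) borel fst = policy_graph \<pi> (fst k)"
    and "distr (policy_pair \<pi> k) borel snd = policy_graph \<pi> (snd k)"
proof -
  have c: "\<pi> (fst k) \<Otimes>\<^sub>M \<pi> (snd k) \<in> couplings (\<pi> (fst k)) (\<pi> (snd k))"
    by (rule pair_measure_in_couplings[OF prob_kernelD(1)[OF \<pi>] prob_kernelD(1)[OF \<pi>]])
  note marginals = distr_distr_map_prod[OF couplings_D(2)[OF c] measurable_Pair_borel measurable_Pair_borel]
  show "distr (policy_pair \<pi> k) borel fst = policy_graph \<pi> (fst k)"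
    "distr (policy_pair \<pi> k) borel snd = policy_graph \<pi> (snd k)"
    unfolding policy_pair_def policy_graph_def marginals couplings_D(3,4)[OF c] by simp_all
qed

lemma bind_policy_pair_marginals:
  assumes \<pi>: "\<pi> \<in> borel \<rightarrow>\<^sub>M prob_algebra borel" and K: "K \<in> space (prob_algebra borel)"
  shows "distr (K \<bind> policy_pair \<pi>) borel fst = distr K borel fst \<bind> policy_graph \<pi>"
    and "distr (K \<bind> policy_pair \<pi>) borel snd = distr K borel snd \<bind> policy_graph \<pi>"
proof -
  have K': "space K \<noteq> {}" "sets K = sets borel"
    using K prob_space.not_empty by (auto simp: space_prob_algebra)
  have pair: "policy_pair \<pi> \<in> K \<rightarrow>\<^sub>M subprob_algebra borel"
    using measurable_prob_algebraD[OF policy_pair_measurable[OF \<pi>]] K'(2) by (simp cong: measurable_cong_sets)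
  have graph: "policy_graph \<pi> \<in> borel \<rightarrow>\<^sub>M subprob_algebra borel"
    using measurable_prob_algebraD[OF policy_graph_measurable[OF \<pi>]] .
  have proj: "fst \<in> K \<rightarrow>\<^sub>M borel" "snd \<in> K \<rightarrow>\<^sub>M borel"
    using measurable_fst_borel measurable_snd_borel K'(2) by (simp_all cong: measurable_cong_sets)
  show "distr (K \<bind> policy_pair \<pi>) borel fst = distr K borel fst \<bind> policy_graph \<pi>"
    by (simp add: distr_bind[OF pair K'(1) measurable_fst_borel] distr_policy_pair[OF \<pi>]
        bind_distr[OF proj(1) graph K'(1)])
  show "distr (K \<bind> policy_pair \<pi>) borel snd = distr K borel snd \<bind> policy_graph \<pi>"
    by (simp add: distr_bind[OF pair K'(1) measurable_snd_borel] distr_policy_pair[OF \<pi>]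
        bind_distr[OF proj(2) graph K'(1)])
qed

lemma bind_policy_graph_fst:
  assumes \<pi>: "\<pi> \<in> borel \<rightarrow>\<^sub>M prob_algebra borel" and \<mu>: "\<mu> \<in> space (prob_algebra borel)"
  shows "distr (\<mu> \<bind> policy_graph \<pi>) borel fst = \<mu>"
proof -
  have \<mu>': "space \<mu> \<noteq> {}" "sets \<mu> = sets borel"
    using \<mu> prob_space.not_empty by (auto simp: space_prob_algebra)
  have graph: "policy_graph \<pi> \<in> \<mu> \<rightarrow>\<^sub>M subprob_algebra borel"
    using measurable_prob_algebraD[OF policy_graph_measurable[OF \<pi>]] \<mu>'(2) by (simp cong: measurable_cong_sets)
  have "distr (policy_graph \<pi> x) borel fst = return borel x" for x
  proof -
    have "Pair x \<in> \<pi> x \<rightarrow>\<^sub>M borel"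
      using measurable_Pair_borel prob_kernelD(3)[OF \<pi>] by (simp cong: measurable_cong_sets)
    then have "distr (policy_graph \<pi> x) borel fst = distr (\<pi> x) borel (\<lambda>_. x)"
      unfolding policy_graph_def by (simp add: distr_distr[OF measurable_fst_borel] comp_def)
    also have "\<dots> = return borel x"
      by (simp add: prob_space.distr_const[OF prob_kernelD(2)[OF \<pi>]])
    finally show ?thesis .
  qed
  then show ?thesis
    by (simp add: distr_bind[OF graph \<mu>'(1) measurable_fst_borel] bind_return''[OF \<mu>'(2)])
qed

lemma distr_opc_transition_fst:
  fixes p :: "'s::euclidean_space \<times> 'a::euclidean_space \<Rightarrow> 's measure"
  assumes p: "p \<in> borel \<rightarrow>\<^sub>M prob_algebra borel" and f: "f \<in> borel_measurable borel"
  shows "distr (opc_transition p f w) borel fst = p (fst w)"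
proof -
  have [measurable]: "f \<in> borel_measurable borel" by (rule f)
  have "(\<lambda>s'. (s', s' + f (snd w) - f (fst w))) \<in> (borel :: 's measure) \<rightarrow>\<^sub>M borel"
    unfolding borel_prod[symmetric] by measurable
  then have "(\<lambda>s'. (s', s' + f (snd w) - f (fst w))) \<in> p (fst w) \<rightarrow>\<^sub>M borel"
    using prob_kernelD(3)[OF p] by (simp cong: measurable_cong_sets)
  then show ?thesis
    unfolding opc_transition_def
    by (simp add: distr_distr[OF measurable_fst_borel] comp_def distr_id2 prob_kernelD(3)[OF p])
qed

lemma AE_policy_graph:
  assumes \<pi>: "\<pi> \<in> borel \<rightarrow>\<^sub>M prob_algebra borel" and S: "S \<in> sets borel" and A: "A \<in> sets borel"
    and x: "x \<in> S" and ae: "AE a in \<pi> x. a \<in> A"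
  shows "AE z in policy_graph \<pi> x. z \<in> S \<times> A"
proof -
  have "Pair x \<in> \<pi> x \<rightarrow>\<^sub>M borel"
    using measurable_Pair_borel prob_kernelD(3)[OF \<pi>] by (simp cong: measurable_cong_sets)
  moreover have "S \<times> A \<in> sets borel"
    using S A unfolding borel_prod[symmetric] by auto
  ultimately show ?thesis
    unfolding policy_graph_def using ae x by (simp add: AE_distr_iff)
qed

lemma AE_bind_policy_graph:
  assumes \<pi>: "\<pi> \<in> borel \<rightarrow>\<^sub>M prob_algebra borel" and S: "S \<in> sets borel" and A: "A \<in> sets borel"
    and \<pi>_A: "\<forall>s\<in>S. AE a in \<pi> s. a \<in> A"
    and \<mu>: "\<mu> \<in> space (prob_algebra borel)" and \<mu>_S: "AE x in \<mu>. x \<in> S"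
  shows "AE z in \<mu> \<bind> policy_graph \<pi>. z \<in> S \<times> A"
proof -
  have graph: "policy_graph \<pi> \<in> \<mu> \<rightarrow>\<^sub>M subprob_algebra borel"
    using measurable_prob_algebraD[OF policy_graph_measurable[OF \<pi>]] \<mu>
    by (simp add: space_prob_algebra cong: measurable_cong_sets)
  have pred: "Measurable.pred borel (\<lambda>z. z \<in> S \<times> A)"
    using S A pred_sets2[of "S \<times> A" borel "\<lambda>z. z" borel] unfolding borel_prod[symmetric] by simp
  show ?thesis
    unfolding AE_bind[OF graph pred] using \<mu>_S by eventually_elim (use AE_policy_graph[OF \<pi> S A] \<pi>_A in auto)
qed

definition policy_reward :: "('s::euclidean_space \<Rightarrow> 'a::euclidean_space measure) \<Rightarrow> ('s \<times> 'a \<Rightarrow> real) \<Rightarrow> 's \<Rightarrow> real" where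
  "policy_reward \<pi> r x = integral\<^sup>L (policy_graph \<pi> x) r"

lemma policy_reward_measurable:
  assumes \<pi>: "\<pi> \<in> borel \<rightarrow>\<^sub>M prob_algebra borel" and r: "r \<in> borel_measurable borel"
  shows "policy_reward \<pi> r \<in> borel_measurable borel"
  unfolding policy_reward_def[abs_def]
  using measurable_prob_algebraD[OF policy_graph_measurable[OF \<pi>]]
  by (rule measurable_compose[OF _ integral_measurable_subprob_algebra[OF r]])

lemma policy_graph_moment:
  assumes \<pi>: "\<pi> \<in> borel \<rightarrow>\<^sub>M prob_algebra borel" and moment: "integrable (\<pi> x) (\<lambda>a. (norm a)\<^sup>2)"
  shows "integrable (policy_graph \<pi> x) (\<lambda>z. (norm z)\<^sup>2)"
proof -
  interpret prob_space "\<pi> x" using prob_kernelD(2)[OF \<pi>] .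
  have "Pair x \<in> \<pi> x \<rightarrow>\<^sub>M borel"
    using measurable_Pair_borel prob_kernelD(3)[OF \<pi>] by (simp cong: measurable_cong_sets)
  moreover have "integrable (\<pi> x) (\<lambda>a. (norm x)\<^sup>2 + (norm a)\<^sup>2)"
    using moment by auto
  then have "integrable (\<pi> x) (\<lambda>a. (norm (x, a))\<^sup>2)"
    by (simp add: norm_Pair)
  ultimately show ?thesis
    unfolding policy_graph_def by (simp add: integrable_distr_eq)
qed

text \<open>The cost of moving \<open>(x, a)\<close> to \<open>(y, a')\<close> splits as \<open>d(x,y)\<^sup>2 + d(a,a')\<^sup>2\<close>, so a coupling
  of \<open>\<pi> x\<close> and \<open>\<pi> y\<close> lifts to one of the graphs whose cost exceeds its own by \<open>d(x,y)\<^sup>2\<close>.\<close>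
lemma policy_reward_diff_le:
  fixes \<pi> :: "'s::euclidean_space \<Rightarrow> 'a::euclidean_space measure" and r :: "'s \<times> 'a \<Rightarrow> real"
  assumes \<pi>: "\<pi> \<in> borel \<rightarrow>\<^sub>M prob_algebra borel" and S: "S \<in> sets borel" and A: "A \<in> sets borel"
    and \<pi>_A: "\<forall>s\<in>S. AE a in \<pi> s. a \<in> A"
    and r_lip: "L_r-lipschitz_on (S \<times> A) r" and r: "r \<in> borel_measurable borel"
    and x: "x \<in> S" "integrable (\<pi> x) (\<lambda>a. (norm a)\<^sup>2)"
    and y: "y \<in> S" "integrable (\<pi> y) (\<lambda>a. (norm a)\<^sup>2)"
  shows "\<bar>policy_reward \<pi> r x - policy_reward \<pi> r y\<bar> \<le> L_r * sqrt ((dist x y)\<^sup>2 + (W2 (\<pi> x) (\<pi> y))\<^sup>2)"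
proof (rule le_W2_if_le_transport_costs[OF prob_kernelD(1)[OF \<pi>] x(2) prob_kernelD(1)[OF \<pi>] y(2)
      lipschitz_on_nonneg[OF r_lip]])
  fix d assume d: "d \<in> couplings (\<pi> x) (\<pi> y)"
  have SA: "S \<times> A \<in> sets borel" using S A unfolding borel_prod[symmetric] by auto
  have "distr d borel (map_prod (Pair x) (Pair y)) \<in> couplings (policy_graph \<pi> x) (policy_graph \<pi> y)"
    unfolding policy_graph_def by (rule couplings_distr_map_prod[OF d measurable_Pair_borel measurable_Pair_borel])
  then have "\<bar>policy_reward \<pi> r x - policy_reward \<pi> r y\<bar>
      \<le> L_r * sqrt (transport_cost (distr d borel (map_prod (Pair x) (Pair y))))"
    unfolding policy_reward_def
    using policy_graph_moment[OF \<pi> x(2)] policy_graph_moment[OF \<pi> y(2)] SA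
      AE_policy_graph[OF \<pi> S A x(1)] AE_policy_graph[OF \<pi> S A y(1)] \<pi>_A x y r_lip r
    by (intro lipschitz_integral_diff_le_transport_cost) auto
  also have "\<dots> = L_r * sqrt ((dist x y)\<^sup>2 + transport_cost d)"
    by (rule arg_cong[where f="\<lambda>t. L_r * sqrt t"],
        rule transport_cost_distr_map_prod_Pair[OF d transport_cost_integrable[OF d x(2) y(2)]])
  finally show "\<bar>policy_reward \<pi> r x - policy_reward \<pi> r y\<bar> \<le> L_r * sqrt ((dist x y)\<^sup>2 + transport_cost d)" .
qed

lemma policy_reward_lipschitz:
  fixes \<pi> :: "'s::euclidean_space \<Rightarrow> 'a::euclidean_space measure" and r :: "'s \<times> 'a \<Rightarrow> real"
  assumes \<pi>: "\<pi> \<in> borel \<rightarrow>\<^sub>M prob_algebra borel" and S: "S \<in> sets borel" and A: "A \<in> sets borel"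
    and \<pi>_A: "\<forall>s\<in>S. AE a in \<pi> s. a \<in> A"
    and moment: "\<forall>s\<in>S. integrable (\<pi> s) (\<lambda>a. (norm a)\<^sup>2)"
    and r_lip: "L_r-lipschitz_on (S \<times> A) r" and r: "r \<in> borel_measurable borel"
    and \<pi>_lip: "\<forall>s\<in>S. \<forall>s'\<in>S. W2 (\<pi> s) (\<pi> s') \<le> L * dist s s'"
  shows "(L_r * sqrt (1 + L\<^sup>2))-lipschitz_on S (policy_reward \<pi> r)"
proof -
  have L_r: "0 \<le> L_r" using r_lip lipschitz_on_nonneg by blast
  have "\<bar>policy_reward \<pi> r x - policy_reward \<pi> r y\<bar> \<le> L_r * sqrt (1 + L\<^sup>2) * dist x y"
    if x: "x \<in> S" and y: "y \<in> S" for x y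
  proof -
    have "\<bar>policy_reward \<pi> r x - policy_reward \<pi> r y\<bar> \<le> L_r * sqrt ((dist x y)\<^sup>2 + (W2 (\<pi> x) (\<pi> y))\<^sup>2)"
      using moment x y by (intro policy_reward_diff_le[OF \<pi> S A \<pi>_A r_lip r]) auto
    also have "\<dots> \<le> L_r * sqrt ((1 + L\<^sup>2) * (dist x y)\<^sup>2)"
    proof -
      have "0 \<le> W2 (\<pi> x) (\<pi> y)" by (simp add: W2_def)
      then have "(W2 (\<pi> x) (\<pi> y))\<^sup>2 \<le> (L * dist x y)\<^sup>2"
        using \<pi>_lip x y by (intro power_mono) auto
      then show ?thesis
        using L_r by (intro mult_left_mono real_sqrt_le_mono) (auto simp: algebra_simps)
    qed
    also have "\<dots> = L_r * sqrt (1 + L\<^sup>2) * dist x y"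
      by (simp add: real_sqrt_mult)
    finally show ?thesis .
  qed
  then show ?thesis
    using L_r by (intro lipschitz_onI) (auto simp: dist_real_def)
qed

lemma integral_bind_policy_graph:
  assumes \<pi>: "\<pi> \<in> borel \<rightarrow>\<^sub>M prob_algebra borel" and S: "S \<in> sets borel" and A: "A \<in> sets borel"
    and \<pi>_A: "\<forall>s\<in>S. AE a in \<pi> s. a \<in> A"
    and r_lip: "L_r-lipschitz_on (S \<times> A) r" and r: "r \<in> borel_measurable borel"
    and \<mu>: "\<mu> \<in> space (prob_algebra borel)" and \<mu>_S: "AE x in \<mu>. x \<in> S"
    and moment: "integrable (\<mu> \<bind> policy_graph \<pi>) (\<lambda>z. (norm z)\<^sup>2)"
  shows "integral\<^sup>L (\<mu> \<bind> policy_graph \<pi>) r = integral\<^sup>L \<mu> (policy_reward \<pi> r)"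
proof -
  have \<mu>': "space \<mu> \<noteq> {}" "sets \<mu> = sets borel"
    using \<mu> prob_space.not_empty by (auto simp: space_prob_algebra)
  have graph: "policy_graph \<pi> \<in> \<mu> \<rightarrow>\<^sub>M prob_algebra borel"
    using policy_graph_measurable[OF \<pi>] \<mu>'(2) by (simp cong: measurable_cong_sets)
  have "\<mu> \<bind> policy_graph \<pi> \<in> space (prob_algebra borel)"
    by (rule bind_in_prob_algebra[OF \<mu> policy_graph_measurable[OF \<pi>]])
  then have "prob_space (\<mu> \<bind> policy_graph \<pi>)" "sets (\<mu> \<bind> policy_graph \<pi>) = sets borel"
    by (simp_all add: space_prob_algebra)
  then have "integrable (\<mu> \<bind> policy_graph \<pi>) r"
    using moment AE_bind_policy_graph[OF \<pi> S A \<pi>_A \<mu> \<mu>_S] r_lip r by (rule lipschitz_on_integrable)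
  then show ?thesis
    unfolding policy_reward_def by (rule integral_bind_integrable[OF graph r \<mu>'(1)])
qed

lemma integral_comp_eq_policy_reward:
  fixes \<pi> :: "'s::euclidean_space \<Rightarrow> 'a::euclidean_space measure" and h :: "'z::real_normed_vector \<Rightarrow> 's \<times> 'a"
  assumes \<pi>: "\<pi> \<in> borel \<rightarrow>\<^sub>M prob_algebra borel" and S: "S \<in> sets borel" and A: "A \<in> sets borel"
    and \<pi>_A: "\<forall>s\<in>S. AE a in \<pi> s. a \<in> A"
    and r_lip: "L_r-lipschitz_on (S \<times> A) r" and r: "r \<in> borel_measurable borel"
    and moment: "integrable J (\<lambda>z. (norm z)\<^sup>2)"
    and h: "h \<in> J \<rightarrow>\<^sub>M borel" and norm_h: "\<And>z. norm (h z) \<le> norm z"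
    and law: "distr J borel h = \<mu> \<bind> policy_graph \<pi>"
    and \<mu>: "\<mu> \<in> space (prob_algebra borel)" and \<mu>_S: "AE x in \<mu>. x \<in> S"
  shows "(\<integral>z. r (h z) \<partial>J) = integral\<^sup>L \<mu> (policy_reward \<pi> r)"
proof -
  have "(\<integral>z. r (h z) \<partial>J) = integral\<^sup>L (\<mu> \<bind> policy_graph \<pi>) r"
    using h r by (simp add: integral_distr flip: law)
  also have "\<dots> = integral\<^sup>L \<mu> (policy_reward \<pi> r)"
    using integrable_distr_norm_sq[OF moment h norm_h] law
    by (intro integral_bind_policy_graph[OF \<pi> S A \<pi>_A r_lip r \<mu> \<mu>_S]) simp
  finally show ?thesis .
qed

context
  fixes \<rho> :: "'s::euclidean_space measure" and \<pi> :: "'s \<Rightarrow> 'a::euclidean_space measure"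
    and p :: "'s \<times> 'a \<Rightarrow> 's measure" and f :: "'s \<times> 'a \<Rightarrow> 's"
  assumes \<rho>: "\<rho> \<in> space (prob_algebra borel)"
    and \<pi>: "\<pi> \<in> borel \<rightarrow>\<^sub>M prob_algebra borel"
    and p: "p \<in> borel \<rightarrow>\<^sub>M prob_algebra borel"
    and f: "f \<in> borel_measurable borel"
begin

lemma opc_joint_in_prob_algebra: "opc_joint \<rho> \<pi> p f t \<in> space (prob_algebra borel)"
proof (induction t)
  case 0
  show ?case
    unfolding opc_joint.simps opc_init_eq_bind_policy_pair[OF \<rho> \<pi>]
    using distr_in_prob_algebra[OF \<rho> measurable_diag_borel] policy_pair_measurable[OF \<pi>]
    by (rule bind_in_prob_algebra)
next
  case (Suc t)
  have "opc_joint \<rho> \<pi> p f t \<bind> opc_transition p f \<in> space (prob_algebra borel)"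
    using Suc opc_transition_measurable[OF p f] by (rule bind_in_prob_algebra)
  then show ?case
    unfolding opc_joint.simps opc_step_eq_bind_policy_pair[OF Suc \<pi> p f]
    using policy_pair_measurable[OF \<pi>] by (rule bind_in_prob_algebra)
qed

lemma opc_states_law_in_prob_algebra: "opc_states_law \<rho> \<pi> p f t \<in> space (prob_algebra borel)"
  using distr_in_prob_algebra[OF \<rho> measurable_diag_borel]
    bind_in_prob_algebra[OF opc_joint_in_prob_algebra opc_transition_measurable[OF p f]]
  by (cases t) (simp_all add: opc_states_law_def)

lemma opc_joint_eq_bind_policy_pair: "opc_joint \<rho> \<pi> p f t = opc_states_law \<rho> \<pi> p f t \<bind> policy_pair \<pi>"
  using opc_init_eq_bind_policy_pair[OF \<rho> \<pi>] opc_step_eq_bind_policy_pair[OF opc_joint_in_prob_algebra \<pi> p f]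
  by (cases t) (simp_all add: opc_states_law_def)

lemma law_states_eq:
  shows "law_ref_state \<rho> \<pi> p f t = distr (opc_states_law \<rho> \<pi> p f t) borel fst"
    and "law_opc_state \<rho> \<pi> p f t = distr (opc_states_law \<rho> \<pi> p f t) borel snd"
proof -
  define K where "K = opc_states_law \<rho> \<pi> p f t"
  have K: "K \<in> space (prob_algebra borel)"
    unfolding K_def by (rule opc_states_law_in_prob_algebra)
  have J: "sets (opc_joint \<rho> \<pi> p f t) = sets borel"
    using opc_joint_in_prob_algebra by (simp add: space_prob_algebra)
  have "fst \<in> opc_joint \<rho> \<pi> p f t \<rightarrow>\<^sub>M borel" "snd \<in> opc_joint \<rho> \<pi> p f t \<rightarrow>\<^sub>M borel"
    using measurable_fst_borel measurable_snd_borel J by (simp_all cong: measurable_cong_sets)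
  then have "law_ref_state \<rho> \<pi> p f t = distr (distr (opc_joint \<rho> \<pi> p f t) borel fst) borel fst"
    and "law_opc_state \<rho> \<pi> p f t = distr (distr (opc_joint \<rho> \<pi> p f t) borel snd) borel fst"
    unfolding law_ref_state_def law_opc_state_def
    by (simp_all add: distr_distr[OF measurable_fst_borel] comp_def)
  then show "law_ref_state \<rho> \<pi> p f t = distr K borel fst" "law_opc_state \<rho> \<pi> p f t = distr K borel snd"
    unfolding opc_joint_eq_bind_policy_pair K_def[symmetric] bind_policy_pair_marginals[OF \<pi> K]
    by (simp_all add: bind_policy_graph_fst[OF \<pi> distr_in_prob_algebra[OF K measurable_fst_borel]]
        bind_policy_graph_fst[OF \<pi> distr_in_prob_algebra[OF K measurable_snd_borel]])
qed

lemma law_states_in_prob_algebra: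
  shows "law_ref_state \<rho> \<pi> p f t \<in> space (prob_algebra borel)"
    and "law_opc_state \<rho> \<pi> p f t \<in> space (prob_algebra borel)"
  unfolding law_states_eq
  by (simp_all add: distr_in_prob_algebra[OF opc_states_law_in_prob_algebra measurable_fst_borel]
      distr_in_prob_algebra[OF opc_states_law_in_prob_algebra measurable_snd_borel])

lemma opc_joint_marginals:
  shows "distr (opc_joint \<rho> \<pi> p f t) borel fst = law_ref_state \<rho> \<pi> p f t \<bind> policy_graph \<pi>"
    and "distr (opc_joint \<rho> \<pi> p f t) borel snd = law_opc_state \<rho> \<pi> p f t \<bind> policy_graph \<pi>"
  unfolding opc_joint_eq_bind_policy_pair law_states_eq
  by (rule bind_policy_pair_marginals[OF \<pi> opc_states_law_in_prob_algebra])+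

lemma law_ref_state_0: "law_ref_state \<rho> \<pi> p f 0 = \<rho>"
proof -
  have "sets \<rho> = sets borel" using \<rho> by (simp add: space_prob_algebra)
  then show ?thesis
    using measurable_diag_borel
    by (simp add: law_states_eq opc_states_law_def distr_distr[OF measurable_fst_borel] comp_def distr_id2
        cong: measurable_cong_sets)
qed

lemma law_ref_state_Suc: "law_ref_state \<rho> \<pi> p f (Suc t) = opc_joint \<rho> \<pi> p f t \<bind> (\<lambda>w. p (fst w))"
proof -
  define J where "J = opc_joint \<rho> \<pi> p f t"
  have J: "sets J = sets borel" "space J \<noteq> {}"
    using opc_joint_in_prob_algebra[of t] prob_space.not_empty by (auto simp: J_def space_prob_algebra)
  have "opc_transition p f \<in> J \<rightarrow>\<^sub>M subprob_algebra borel"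
    using measurable_prob_algebraD[OF opc_transition_measurable[OF p f]] J(1) by (simp cong: measurable_cong_sets)
  then show ?thesis
    by (simp add: law_states_eq opc_states_law_def J_def[symmetric] distr_bind[OF _ J(2) measurable_fst_borel]
        distr_opc_transition_fst[OF p f])
qed

lemma AE_law_ref_state:
  assumes S: "S \<in> sets borel" and A: "A \<in> sets borel"
    and \<rho>_S: "AE s in \<rho>. s \<in> S"
    and \<pi>_A: "\<forall>s\<in>S. AE a in \<pi> s. a \<in> A"
    and p_S: "\<forall>s\<in>S. \<forall>a\<in>A. AE s' in p (s, a). s' \<in> S"
  shows "AE x in law_ref_state \<rho> \<pi> p f t. x \<in> S"
proof (induction t)
  case 0
  show ?case unfolding law_ref_state_0 by (rule \<rho>_S)
next
  case (Suc t)
  define J where "J = opc_joint \<rho> \<pi> p f t"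
  have SA: "S \<times> A \<in> sets borel"
    using S A unfolding borel_prod[symmetric] by auto
  have fst_J: "fst \<in> J \<rightarrow>\<^sub>M borel"
    using measurable_fst_borel opc_joint_in_prob_algebra[of t]
    by (simp add: J_def space_prob_algebra cong: measurable_cong_sets)
  have "AE z in distr J borel fst. z \<in> S \<times> A"
    unfolding J_def opc_joint_marginals
    by (rule AE_bind_policy_graph[OF \<pi> S A \<pi>_A law_states_in_prob_algebra(1) Suc])
  then have J_SA: "AE w in J. fst w \<in> S \<times> A"
    using SA fst_J by (simp add: AE_distr_iff)
  have p_fst: "(\<lambda>w. p (fst w)) \<in> J \<rightarrow>\<^sub>M subprob_algebra borel"
    using measurable_compose[OF fst_J measurable_prob_algebraD[OF p]] .
  have pred: "Measurable.pred borel (\<lambda>x. x \<in> S)"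
    using S pred_sets2[of S borel "\<lambda>x. x" borel] by simp
  show ?case
    unfolding law_ref_state_Suc J_def[symmetric] AE_bind[OF p_fst pred] using J_SA
  proof eventually_elim
    case (elim w)
    then obtain s a where w: "fst w = (s, a)" and "s \<in> S" "a \<in> A"
      by (cases "fst w") auto
    then have "AE s' in p (s, a). s' \<in> S"
      using p_S by blast
    then show ?case unfolding w .
  qed
qed

lemma opc_reward_gap_le:
  fixes r :: "'s \<times> 'a \<Rightarrow> real"
  assumes S: "S \<in> sets borel" and A: "A \<in> sets borel"
    and \<rho>_S: "AE s in \<rho>. s \<in> S"
    and \<pi>_A: "\<forall>s\<in>S. AE a in \<pi> s. a \<in> A"
    and p_S: "\<forall>s\<in>S. \<forall>a\<in>A. AE s' in p (s, a). s' \<in> S"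
    and moment_\<pi>: "\<forall>s\<in>S. integrable (\<pi> s) (\<lambda>a. (norm a)\<^sup>2)"
    and r_lip: "L_r-lipschitz_on (S \<times> A) r" and r: "r \<in> borel_measurable borel"
    and \<pi>_lip: "\<forall>s\<in>S. \<forall>s'\<in>S. W2 (\<pi> s) (\<pi> s') \<le> L * dist s s'"
    and opc_S: "AE z in opc_joint \<rho> \<pi> p f t. fst (snd z) \<in> S"
    and moment: "integrable (opc_joint \<rho> \<pi> p f t) (\<lambda>z. (norm z)\<^sup>2)"
  shows "\<bar>(\<integral>z. r (fst z) \<partial>opc_joint \<rho> \<pi> p f t) - (\<integral>z. r (snd z) \<partial>opc_joint \<rho> \<pi> p f t)\<bar>
    \<le> L_r * sqrt (1 + L\<^sup>2) * W2 (law_ref_state \<rho> \<pi> p f t) (law_opc_state \<rho> \<pi> p f t)"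
proof -
  define J \<mu> \<nu> where "J = opc_joint \<rho> \<pi> p f t"
    and "\<mu> = law_ref_state \<rho> \<pi> p f t" and "\<nu> = law_opc_state \<rho> \<pi> p f t"
  have "sets J = sets borel"
    using opc_joint_in_prob_algebra by (simp add: J_def space_prob_algebra)
  then have fst_J: "fst \<in> J \<rightarrow>\<^sub>M borel" and snd_J: "snd \<in> J \<rightarrow>\<^sub>M borel"
    using measurable_fst_borel measurable_snd_borel by (simp_all cong: measurable_cong_sets)
  have \<mu>: "\<mu> \<in> space (prob_algebra borel)" and \<nu>: "\<nu> \<in> space (prob_algebra borel)"
    unfolding \<mu>_def \<nu>_def by (rule law_states_in_prob_algebra)+
  have \<mu>_S: "AE x in \<mu>. x \<in> S"
    unfolding \<mu>_def by (rule AE_law_ref_state[OF S A \<rho>_S \<pi>_A p_S])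
  have "AE x in distr J borel (\<lambda>z. fst (snd z)). x \<in> S"
    using opc_S[folded J_def] S
    by (subst AE_distr_iff[OF measurable_compose[OF snd_J measurable_fst_borel]]) auto
  then have \<nu>_S: "AE x in \<nu>. x \<in> S"
    unfolding \<nu>_def law_opc_state_def J_def[symmetric] .
  have \<mu>_moment: "integrable \<mu> (\<lambda>x. (norm x)\<^sup>2)" and \<nu>_moment: "integrable \<nu> (\<lambda>x. (norm x)\<^sup>2)"
    unfolding \<mu>_def \<nu>_def law_ref_state_def law_opc_state_def J_def[symmetric]
    using moment[folded J_def] measurable_compose[OF fst_J measurable_fst_borel] measurable_compose[OF snd_J measurable_fst_borel]
    by (auto intro!: integrable_distr_norm_sq intro: order_trans[OF norm_fst_le_norm] norm_fst_le_norm norm_snd_le_norm)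
  have "\<bar>integral\<^sup>L \<mu> (policy_reward \<pi> r) - integral\<^sup>L \<nu> (policy_reward \<pi> r)\<bar>
      \<le> L_r * sqrt (1 + L\<^sup>2) * W2 \<mu> \<nu>"
    by (rule lipschitz_integral_diff_le_W2[OF \<mu> \<mu>_moment \<nu> \<nu>_moment S \<mu>_S \<nu>_S
          policy_reward_lipschitz[OF \<pi> S A \<pi>_A moment_\<pi> r_lip r \<pi>_lip] policy_reward_measurable[OF \<pi> r]])
  then show ?thesis
    unfolding J_def[symmetric] \<mu>_def[symmetric] \<nu>_def[symmetric]
    using integral_comp_eq_policy_reward[OF \<pi> S A \<pi>_A r_lip r moment[folded J_def], OF fst_J norm_fst_le_norm
        opc_joint_marginals(1)[of t, folded J_def \<mu>_def] \<mu> \<mu>_S]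
      integral_comp_eq_policy_reward[OF \<pi> S A \<pi>_A r_lip r moment[folded J_def], OF snd_J norm_snd_le_norm
        opc_joint_marginals(2)[of t, folded J_def \<nu>_def] \<nu> \<nu>_S]
    by simp
qed

end

theorem lemma5:
  fixes S :: "'s::euclidean_space set" and A :: "'a::euclidean_space set"
    and \<rho> :: "'s measure" and \<pi> :: "'s \<Rightarrow> 'a measure" and p :: "'s \<times> 'a \<Rightarrow> 's measure"
    and f :: "'s \<times> 'a \<Rightarrow> 's" and r :: "'s \<times> 'a \<Rightarrow> real"
    and \<gamma> L_r L_\<pi> :: real and T :: nat
  assumes S_borel: "S \<in> sets borel" and A_borel: "A \<in> sets borel"
    and rho: "\<rho> \<in> space (prob_algebra borel)"
    and pi_kernel: "\<pi> \<in> borel \<rightarrow>\<^sub>M prob_algebra borel"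
    and p_kernel: "p \<in> borel \<rightarrow>\<^sub>M prob_algebra borel"
    and f_meas: "f \<in> borel_measurable borel"
    and r_meas: "r \<in> borel_measurable borel"
    and rho_S: "AE s in \<rho>. s \<in> S"
    and pi_A: "\<forall>s\<in>S. AE a in \<pi> s. a \<in> A"
    and p_S: "\<forall>s\<in>S. \<forall>a\<in>A. AE s' in p (s, a). s' \<in> S"
    and opc_in_S: "\<forall>t\<le>T. AE z in opc_joint \<rho> \<pi> p f t. fst (snd z) \<in> S"
    and gamma: "0 \<le> \<gamma>" "\<gamma> < 1"
    and mom_rho: "integrable \<rho> (\<lambda>s. (norm s)\<^sup>2)"
    and mom_pi: "\<forall>s\<in>S. integrable (\<pi> s) (\<lambda>a. (norm a)\<^sup>2)"
    and mom_p: "\<forall>s\<in>S. \<forall>a\<in>A. integrable (p (s, a)) (\<lambda>s'. (norm s')\<^sup>2)"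
    and mom_joint: "\<forall>t\<le>T. integrable (opc_joint \<rho> \<pi> p f t) (\<lambda>z. (norm z)\<^sup>2)"
    and r_lip: "L_r-lipschitz_on (S \<times> A) r"
    and pi_lip: "\<forall>s\<in>S. \<forall>s'\<in>S. W2 (\<pi> s) (\<pi> s') \<le> L_\<pi> * dist s s'"
  shows "\<bar>true_return \<rho> \<pi> p f r \<gamma> T - opc_return \<rho> \<pi> p f r \<gamma> T\<bar>
    \<le> L_r * sqrt (1 + L_\<pi>\<^sup>2) *
       (\<Sum>t\<le>T. \<gamma> ^ t * W2 (law_ref_state \<rho> \<pi> p f t) (law_opc_state \<rho> \<pi> p f t))"
proof -
  define K where "K = L_r * sqrt (1 + L_\<pi>\<^sup>2)"
  have "\<bar>true_return \<rho> \<pi> p f r \<gamma> T - opc_return \<rho> \<pi> p f r \<gamma> T\<bar>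
      \<le> (\<Sum>t\<le>T. \<gamma> ^ t * (K * W2 (law_ref_state \<rho> \<pi> p f t) (law_opc_state \<rho> \<pi> p f t)))"
    unfolding true_return_def opc_return_def K_def
  proof (rule abs_discounted_sum_diff_le[OF gamma(1)])
    fix t assume "t \<le> T"
    then show "\<bar>(\<integral>z. r (fst z) \<partial>opc_joint \<rho> \<pi> p f t) - (\<integral>z. r (snd z) \<partial>opc_joint \<rho> \<pi> p f t)\<bar>
        \<le> L_r * sqrt (1 + L_\<pi>\<^sup>2) * W2 (law_ref_state \<rho> \<pi> p f t) (law_opc_state \<rho> \<pi> p f t)"
      using opc_in_S mom_joint
      by (intro opc_reward_gap_le[OF rho pi_kernel p_kernel f_meas S_borel A_borel rho_S pi_A p_S
            mom_pi r_lip r_meas pi_lip]) auto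
  qed
  also have "\<dots> = K * (\<Sum>t\<le>T. \<gamma> ^ t * W2 (law_ref_state \<rho> \<pi> p f t) (law_opc_state \<rho> \<pi> p f t))"
    by (simp add: sum_distrib_left algebra_simps)
  finally show ?thesis unfolding K_def .
qed

end
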